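(* Let $1\le k\le n$ be integers, let $M\in\mathbb{R}^{2n\times 2n}$ be symmetric positive definite, let $N=\operatorname{diag}(\nu_1,\ldots,\nu_k)$ with $0<\nu_1<\cdots<\nu_k$, and let $\tilde N=\operatorname{diag}(N,N)$. Consider the problem of minimizing $f(X)=\operatorname{tr}(\tilde N X^TMX)$ over $X\in\mathbb{R}^{2n\times 2k}$ subject to $X^TJ_{2n}X=J_{2k}$. Let $X_*$ be a critical point of this problem whose columns are associated with the symplectic eigenvalues $[d_{i_1},\ldots,d_{i_k}]$ of $M$, i.e., $X_*^TMX_*=\operatorname{diag}(D_{\mathcal I_k},D_{\mathcal I_k})$ with $D_{\mathcal I_k}=\operatorname{diag}(d_{i_1},\ldots,d_{i_k})$, and suppose these are not in nonincreasing order, i.e., there exist $1\le\alpha<\beta\le k$ with $d_{i_\alpha}<d_{i_\beta}$. Then $X_*$ is not a (local) minimizer of the problem, and therefore it is a saddle point.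
   Context: $J_{2m}=\begin{bmatrix}0 & I_m\\ -I_m & 0\end{bmatrix}$. The symplectic eigenvalues of $M$ are the positive numbers $d_1,\ldots,d_n$ such that $S^TMS=\operatorname{diag}(D,D)$, $D=\operatorname{diag}(d_1,\ldots,d_n)$, for some $S\in\mathbb{R}^{2n\times2n}$ with $S^TJ_{2n}S=J_{2n}$ (Williamson's theorem). A point $X_*$ is a critical point of the problem if $X_*^TJ_{2n}X_*=J_{2k}$ and there exists a skew-symmetric $L_*\in\mathbb{R}^{2k\times 2k}$ with $MX_*\tilde N=J_{2n}X_*L_*$. A saddle point is a critical point that is neither a local minimizer nor a local maximizer of $f$ on the feasible set $\{X: X^TJ_{2n}X=J_{2k}\}$. *)

theory Defs
  imports "Jordan_Normal_Form.Matrix"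
begin

definition Jsym :: "nat \<Rightarrow> real mat" where
  "Jsym m = four_block_mat (0\<^sub>m m m) (1\<^sub>m m) (- 1\<^sub>m m) (0\<^sub>m m m)"

definition diag2 :: "nat \<Rightarrow> (nat \<Rightarrow> real) \<Rightarrow> real mat" where
  "diag2 m d = four_block_mat (mat_diag m d) (0\<^sub>m m m) (0\<^sub>m m m) (mat_diag m d)"

definition mtrace :: "real mat \<Rightarrow> real" where
  "mtrace A = (\<Sum>i<dim_row A. A $$ (i,i))"

definition mat_dist :: "real mat \<Rightarrow> real mat \<Rightarrow> real" where
  "mat_dist A B = sqrt (\<Sum>i<dim_row A. \<Sum>j<dim_col A. (A $$ (i,j) - B $$ (i,j))\<^sup>2)"

definition sym_pos_def :: "nat \<Rightarrow> real mat \<Rightarrow> bool" where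
  "sym_pos_def m M \<longleftrightarrow> M \<in> carrier_mat m m \<and> transpose_mat M = M \<and>
     (\<forall>x \<in> carrier_vec m. x \<noteq> 0\<^sub>v m \<longrightarrow> x \<bullet> (M *\<^sub>v x) > 0)"

definition symplectic :: "nat \<Rightarrow> real mat \<Rightarrow> bool" where
  "symplectic m S \<longleftrightarrow> S \<in> carrier_mat (2*m) (2*m) \<and> transpose_mat S * Jsym m * S = Jsym m"

text \<open>d 0, ..., d (n-1) are the symplectic eigenvalues of M (Williamson's theorem)\<close>
definition symp_eigenvalues :: "nat \<Rightarrow> real mat \<Rightarrow> (nat \<Rightarrow> real) \<Rightarrow> bool" where
  "symp_eigenvalues n M d \<longleftrightarrow> (\<forall>i<n. d i > 0) \<and>
     (\<exists>S. symplectic n S \<and> transpose_mat S * M * S = diag2 n d)"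

definition feasible :: "nat \<Rightarrow> nat \<Rightarrow> real mat \<Rightarrow> bool" where
  "feasible n k X \<longleftrightarrow> X \<in> carrier_mat (2*n) (2*k) \<and> transpose_mat X * Jsym n * X = Jsym k"

definition fobj :: "nat \<Rightarrow> (nat \<Rightarrow> real) \<Rightarrow> real mat \<Rightarrow> real mat \<Rightarrow> real" where
  "fobj k nu M X = mtrace (diag2 k nu * transpose_mat X * M * X)"

definition local_min :: "nat \<Rightarrow> nat \<Rightarrow> (nat \<Rightarrow> real) \<Rightarrow> real mat \<Rightarrow> real mat \<Rightarrow> bool" where
  "local_min n k nu M X \<longleftrightarrow> feasible n k X \<and>
     (\<exists>e>0. \<forall>Y. feasible n k Y \<and> mat_dist Y X < e \<longrightarrow> fobj k nu M X \<le> fobj k nu M Y)"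

definition local_max :: "nat \<Rightarrow> nat \<Rightarrow> (nat \<Rightarrow> real) \<Rightarrow> real mat \<Rightarrow> real mat \<Rightarrow> bool" where
  "local_max n k nu M X \<longleftrightarrow> feasible n k X \<and>
     (\<exists>e>0. \<forall>Y. feasible n k Y \<and> mat_dist Y X < e \<longrightarrow> fobj k nu M Y \<le> fobj k nu M X)"

definition critical_point :: "nat \<Rightarrow> nat \<Rightarrow> (nat \<Rightarrow> real) \<Rightarrow> real mat \<Rightarrow> real mat \<Rightarrow> bool" where
  "critical_point n k nu M X \<longleftrightarrow> feasible n k X \<and>
     (\<exists>L. L \<in> carrier_mat (2*k) (2*k) \<and> transpose_mat L = - L \<and>
          M * X * diag2 k nu = Jsym n * X * L)"

definition saddle_point :: "nat \<Rightarrow> nat \<Rightarrow> (nat \<Rightarrow> real) \<Rightarrow> real mat \<Rightarrow> real mat \<Rightarrow> bool" where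
  "saddle_point n k nu M X \<longleftrightarrow> critical_point n k nu M X \<and>
     \<not> local_min n k nu M X \<and> \<not> local_max n k nu M X"

end

theory Submission
  imports Defs
begin

(* Right-multiplying a feasible X by a symplectic block-diagonal matrix diag(A, B), A^T B = I, keeps it
   feasible, and when X^T M X = diag(D, D) the objective becomes tr(N A^T D A) + tr(N B^T D B).
   Taking A = B a Givens rotation by angle t in the plane of the indices alpha < beta changes f by
   -2 sin(t)^2 (nu_beta - nu_alpha)(d_(i_beta) - d_(i_alpha)) < 0, so X is not a local minimizer;
   scaling the alpha-th coordinate by e^t in A and by e^-t in B changes f by
   nu_alpha d_(i_alpha) (e^t - e^-t)^2 > 0, so X is not a local maximizer either. *)

lemma assoc_mult_mat_dims:
  "dim_col A = dim_row B \<Longrightarrow> dim_col B = dim_row C \<Longrightarrow> A * B * C = A * (B * C)"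
  for A B C :: "'a::semiring_0 mat"
  by (rule assoc_mult_mat) auto

lemma sum_lessThan_add_split:
  "(\<Sum>i<m+n. f i) = (\<Sum>i<m. f i) + (\<Sum>i<n. f (i+m))" for f :: "nat \<Rightarrow> 'a::comm_monoid_add"
proof -
  have "(\<Sum>i<m+n. f i) = (\<Sum>i\<in>{0..<m}. f i) + (\<Sum>i\<in>{0+m..<n+m}. f i)"
    by (simp add: lessThan_atLeast0 sum.atLeastLessThan_concat add.commute)
  then show ?thesis by (simp only: sum.shift_bounds_nat_ivl lessThan_atLeast0)
qed

lemma Jsym_carrier: "Jsym m \<in> carrier_mat (2*m) (2*m)"
  unfolding Jsym_def mult_2 by (rule four_block_carrier_mat) auto

lemma diag2_carrier: "diag2 k f \<in> carrier_mat (2*k) (2*k)"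
  unfolding diag2_def mult_2 by (rule four_block_carrier_mat) auto

lemma diag2_eq_mat_diag: "diag2 k f = mat_diag (2*k) (\<lambda>i. if i < k then f i else f (i-k))"
  unfolding diag2_def mat_diag_def by (rule eq_matI) auto

definition block_diag :: "nat \<Rightarrow> real mat \<Rightarrow> real mat \<Rightarrow> real mat" where
  "block_diag k A B = four_block_mat A (0\<^sub>m k k) (0\<^sub>m k k) B"

lemma block_diag_carrier:
  "A \<in> carrier_mat k k \<Longrightarrow> B \<in> carrier_mat k k \<Longrightarrow> block_diag k A B \<in> carrier_mat (2*k) (2*k)"
  unfolding block_diag_def mult_2 by (rule four_block_carrier_mat) auto

lemma block_diag_one: "block_diag k (1\<^sub>m k) (1\<^sub>m k) = 1\<^sub>m (2*k)"
  unfolding block_diag_def mult_2 by simp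

lemma symplectic_block_diag:
  assumes A: "A \<in> carrier_mat k k" and B: "B \<in> carrier_mat k k"
    and AB: "transpose_mat A * B = 1\<^sub>m k"
  shows "symplectic k (block_diag k A B)"
proof -
  have BA: "transpose_mat B * A = 1\<^sub>m k"
    using arg_cong[OF AB, of transpose_mat] A B by (simp add: transpose_mult[of _ k k])
  have "transpose_mat (block_diag k A B) * Jsym k
      = four_block_mat (0\<^sub>m k k) (transpose_mat A) (- transpose_mat B) (0\<^sub>m k k)"
    unfolding block_diag_def Jsym_def using A B
    by (subst transpose_four_block_mat, auto, subst mult_four_block_mat, auto)
  also have "\<dots> * block_diag k A B = Jsym k"
    unfolding block_diag_def Jsym_def using A B AB BA
    by (subst mult_four_block_mat, auto)
  finally show ?thesis
    unfolding symplectic_def using block_diag_carrier[OF A B] by simp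
qed

lemma feasible_mult_symplectic:
  assumes X: "feasible n k X" and R: "symplectic k R"
  shows "feasible n k (X * R)"
proof -
  have Xc: "X \<in> carrier_mat (2*n) (2*k)" and Rc: "R \<in> carrier_mat (2*k) (2*k)"
    using X R unfolding feasible_def symplectic_def by auto
  have "transpose_mat (X * R) * Jsym n * (X * R) = transpose_mat R * (transpose_mat X * Jsym n * X) * R"
    using carrier_matD[OF Xc] carrier_matD[OF Rc] carrier_matD[OF Jsym_carrier[of n]]
    by (simp add: transpose_mult[OF Xc Rc] assoc_mult_mat_dims)
  then show ?thesis
    using X R Xc Rc unfolding feasible_def symplectic_def by simp
qed

definition diag_trace_form :: "nat \<Rightarrow> (nat \<Rightarrow> real) \<Rightarrow> (nat \<Rightarrow> real) \<Rightarrow> real mat \<Rightarrow> real" where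
  "diag_trace_form m f g R = (\<Sum>i<m. f i * (\<Sum>l<m. g l * (R $$ (l,i))\<^sup>2))"

lemma mtrace_diag_congruence:
  assumes R: "R \<in> carrier_mat m m"
  shows "mtrace (mat_diag m f * transpose_mat R * mat_diag m g * R) = diag_trace_form m f g R"
proof -
  have GR: "mat_diag m g * R = mat m m (\<lambda>(i,j). g i * R $$ (i,j))"
    by (rule mat_diag_mult_left[OF R])
  have RGR: "transpose_mat R * (mat_diag m g * R) \<in> carrier_mat m m"
    using R by (simp add: GR)
  have assoc: "mat_diag m f * transpose_mat R * mat_diag m g * R
      = mat_diag m f * (transpose_mat R * (mat_diag m g * R))"
    using carrier_matD[OF R] carrier_matD[OF mat_diag_dim[of m f]] carrier_matD[OF mat_diag_dim[of m g]]
    by (simp add: assoc_mult_mat_dims)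
  show ?thesis
    unfolding mtrace_def diag_trace_form_def assoc mat_diag_mult_left[OF RGR] unfolding GR
    using R by (auto simp: scalar_prod_def power2_eq_square lessThan_atLeast0 algebra_simps intro!: sum.cong)
qed

lemma fobj_mult_right:
  assumes X: "X \<in> carrier_mat (2*n) (2*k)" and M: "M \<in> carrier_mat (2*n) (2*n)"
    and R: "R \<in> carrier_mat (2*k) (2*k)"
  shows "fobj k nu M (X * R) = mtrace (diag2 k nu * transpose_mat R * (transpose_mat X * M * X) * R)"
  unfolding fobj_def
  using carrier_matD[OF diag2_carrier[of k nu]] carrier_matD[OF X] carrier_matD[OF M] carrier_matD[OF R]
  by (simp add: transpose_mult[OF X R] assoc_mult_mat_dims)

lemma fobj_mult_block_diag:
  assumes X: "X \<in> carrier_mat (2*n) (2*k)" and M: "M \<in> carrier_mat (2*n) (2*n)"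
    and XMX: "transpose_mat X * M * X = diag2 k D"
    and A: "A \<in> carrier_mat k k" and B: "B \<in> carrier_mat k k"
  shows "fobj k nu M (X * block_diag k A B) = diag_trace_form k nu D A + diag_trace_form k nu D B"
proof -
  have R: "block_diag k A B \<in> carrier_mat (2*k) (2*k)" using A B by (rule block_diag_carrier)
  have "fobj k nu M (X * block_diag k A B) = diag_trace_form (2*k) (\<lambda>i. if i < k then nu i else nu (i-k))
      (\<lambda>i. if i < k then D i else D (i-k)) (block_diag k A B)"
    unfolding fobj_mult_right[OF X M R] XMX diag2_eq_mat_diag by (rule mtrace_diag_congruence[OF R])
  also have "\<dots> = diag_trace_form k nu D A + diag_trace_form k nu D B"
    unfolding diag_trace_form_def mult_2 sum_lessThan_add_split
    using A B by (simp add: block_diag_def)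
  finally show ?thesis .
qed

lemma diag_trace_form_mat_diag:
  "diag_trace_form k nu D (mat_diag k s) = (\<Sum>i<k. nu i * D i * (s i)\<^sup>2)"
  unfolding diag_trace_form_def
proof (intro sum.cong refl)
  fix i assume "i \<in> {..<k}"
  then have "(\<Sum>l<k. D l * (mat_diag k s $$ (l,i))\<^sup>2) = (\<Sum>l\<in>{i}. D l * (mat_diag k s $$ (l,i))\<^sup>2)"
    by (intro sum.mono_neutral_right) (auto simp: mat_diag_def)
  also have "\<dots> = D i * (s i)\<^sup>2"
    using \<open>i \<in> {..<k}\<close> by (simp add: mat_diag_def)
  finally show "nu i * (\<Sum>l<k. D l * (mat_diag k s $$ (l,i))\<^sup>2) = nu i * D i * (s i)\<^sup>2"
    by simp
qed

lemma diag_trace_form_one: "diag_trace_form k nu D (1\<^sub>m k) = (\<Sum>i<k. nu i * D i)"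
  using diag_trace_form_mat_diag[of k nu D "\<lambda>_. 1"] by simp

definition givens_rotation :: "nat \<Rightarrow> nat \<Rightarrow> nat \<Rightarrow> real \<Rightarrow> real mat" where
  "givens_rotation k a b t = mat k k (\<lambda>(i,j).
     if i = j then (if i = a \<or> i = b then cos t else 1)
     else if i = b \<and> j = a then sin t else if i = a \<and> j = b then - sin t else 0)"

lemma givens_rotation_carrier: "givens_rotation k a b t \<in> carrier_mat k k"
  unfolding givens_rotation_def by simp

lemma givens_rotation_zero: "givens_rotation k a b 0 = 1\<^sub>m k"
  unfolding givens_rotation_def by (rule eq_matI) auto

lemma givens_rotation_orthogonal:
  assumes ab: "a < k" "b < k" "a \<noteq> b"
  shows "transpose_mat (givens_rotation k a b t) * givens_rotation k a b t = 1\<^sub>m k"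
proof (rule eq_matI)
  fix i j assume "i < dim_row (1\<^sub>m k)" and "j < dim_col (1\<^sub>m k)"
  then have i: "i < k" and j: "j < k" by auto
  let ?G = "givens_rotation k a b t"
  have "(transpose_mat ?G * ?G) $$ (i,j) = (\<Sum>l<k. ?G $$ (l,i) * ?G $$ (l,j))"
    using i j by (simp add: givens_rotation_def scalar_prod_def lessThan_atLeast0)
  also have "\<dots> = (\<Sum>l\<in>{a,b} \<union> {i}. ?G $$ (l,i) * ?G $$ (l,j))"
    by (rule sum.mono_neutral_right) (use ab i j in \<open>auto simp: givens_rotation_def\<close>)
  also have "\<dots> = 1\<^sub>m k $$ (i,j)"
    using ab i j
    by (cases "i = a"; cases "i = b"; cases "j = a"; cases "j = b")
      (auto simp: givens_rotation_def insert_absorb power2_eq_square[symmetric])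
  finally show "(transpose_mat ?G * ?G) $$ (i,j) = 1\<^sub>m k $$ (i,j)" .
qed (auto simp: givens_rotation_def)

lemma givens_rotation_weighted_col:
  assumes ab: "a < k" "b < k" "a \<noteq> b" and i: "i < k"
  shows "(\<Sum>l<k. D l * (givens_rotation k a b t $$ (l,i))\<^sup>2) = D i
    + (if i = a then (sin t)\<^sup>2 * (D b - D a) else if i = b then (sin t)\<^sup>2 * (D a - D b) else 0)"
proof -
  let ?G = "givens_rotation k a b t"
  have "(\<Sum>l<k. D l * (?G $$ (l,i))\<^sup>2) = (\<Sum>l\<in>{a,b} \<union> {i}. D l * (?G $$ (l,i))\<^sup>2)"
    by (rule sum.mono_neutral_right) (use ab i in \<open>auto simp: givens_rotation_def\<close>)
  also have "\<dots> = D i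
    + (if i = a then (sin t)\<^sup>2 * (D b - D a) else if i = b then (sin t)\<^sup>2 * (D a - D b) else 0)"
    using ab i
    by (cases "i = a"; cases "i = b") (auto simp: givens_rotation_def insert_absorb cos_squared_eq algebra_simps)
  finally show ?thesis .
qed

lemma diag_trace_form_givens_rotation:
  assumes ab: "a < k" "b < k" "a \<noteq> b"
  shows "diag_trace_form k nu D (givens_rotation k a b t)
    = (\<Sum>i<k. nu i * D i) - (sin t)\<^sup>2 * (nu b - nu a) * (D b - D a)"
proof -
  have "diag_trace_form k nu D (givens_rotation k a b t) = (\<Sum>i<k. nu i * D i
      + (if i = a then nu a * (sin t)\<^sup>2 * (D b - D a) else 0)
      + (if i = b then nu b * (sin t)\<^sup>2 * (D a - D b) else 0))"
    unfolding diag_trace_form_def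
    by (intro sum.cong) (use ab in \<open>auto simp: givens_rotation_weighted_col algebra_simps\<close>)
  then show ?thesis
    using ab by (simp add: sum.distrib algebra_simps)
qed

definition coord_scaling :: "nat \<Rightarrow> nat \<Rightarrow> real \<Rightarrow> real mat" where
  "coord_scaling k a c = mat_diag k (\<lambda>i. if i = a then c else 1)"

lemma coord_scaling_carrier: "coord_scaling k a c \<in> carrier_mat k k"
  unfolding coord_scaling_def by simp

lemma coord_scaling_one: "coord_scaling k a 1 = 1\<^sub>m k"
  unfolding coord_scaling_def by simp

lemma coord_scaling_transpose_inverse:
  assumes "c \<noteq> 0"
  shows "transpose_mat (coord_scaling k a c) * coord_scaling k a (1 / c) = 1\<^sub>m k"
proof -
  have "transpose_mat (coord_scaling k a c) = coord_scaling k a c"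
    unfolding coord_scaling_def mat_diag_def by (rule eq_matI) auto
  moreover have "(\<lambda>i. (if i = a then c else 1) * (if i = a then 1 / c else 1)) = (\<lambda>i. 1)"
    using assms by auto
  ultimately show ?thesis
    unfolding coord_scaling_def by simp
qed

lemma diag_trace_form_coord_scaling:
  assumes "a < k"
  shows "diag_trace_form k nu D (coord_scaling k a c) = (\<Sum>i<k. nu i * D i) + nu a * D a * (c\<^sup>2 - 1)"
proof -
  have "diag_trace_form k nu D (coord_scaling k a c)
      = (\<Sum>i<k. nu i * D i + (if i = a then nu a * D a * (c\<^sup>2 - 1) else 0))"
    unfolding coord_scaling_def diag_trace_form_mat_diag by (intro sum.cong) (auto simp: algebra_simps)
  then show ?thesis
    using assms by (simp add: sum.distrib)
qed

lemma continuous_if_const [continuous_intros]: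
  "continuous F f \<Longrightarrow> continuous F g \<Longrightarrow> continuous F (\<lambda>t. if P then f t else g t)"
  by (cases P) auto

lemma isCont_givens_rotation_entry:
  "i < k \<Longrightarrow> j < k \<Longrightarrow> isCont (\<lambda>t. givens_rotation k a b t $$ (i,j)) t0"
  unfolding givens_rotation_def by (simp, intro continuous_intros)

lemma isCont_coord_scaling_entry:
  "isCont c t0 \<Longrightarrow> i < k \<Longrightarrow> j < k \<Longrightarrow> isCont (\<lambda>t. coord_scaling k a (c t) $$ (i,j)) t0"
  unfolding coord_scaling_def mat_diag_def by (simp, intro continuous_intros)

lemma isCont_block_diag_entry:
  assumes A: "\<And>t. A t \<in> carrier_mat k k" and B: "\<And>t. B t \<in> carrier_mat k k"
    and A_cont: "\<And>i j. i < k \<Longrightarrow> j < k \<Longrightarrow> isCont (\<lambda>t. A t $$ (i,j)) t0"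
    and B_cont: "\<And>i j. i < k \<Longrightarrow> j < k \<Longrightarrow> isCont (\<lambda>t. B t $$ (i,j)) t0"
    and ij: "i < 2*k" "j < 2*k"
  shows "isCont (\<lambda>t. block_diag k (A t) (B t) $$ (i,j)) t0"
proof -
  have "block_diag k (A t) (B t) $$ (i,j) = (if i < k then if j < k then A t $$ (i,j) else 0
      else if j < k then 0 else B t $$ (i-k, j-k))" for t
    unfolding block_diag_def using A[of t] B[of t] ij by auto
  then show ?thesis
    using ij by (cases "i < k"; cases "j < k") (auto intro!: A_cont B_cont)
qed

lemma mat_dist_mult_right_tendsto:
  fixes R :: "'a::t2_space \<Rightarrow> real mat"
  assumes X: "X \<in> carrier_mat p q" and R: "\<And>t. R t \<in> carrier_mat q q" and R0: "R t0 = 1\<^sub>m q"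
    and cont: "\<And>i j. i < q \<Longrightarrow> j < q \<Longrightarrow> isCont (\<lambda>t. R t $$ (i,j)) t0"
  shows "((\<lambda>t. mat_dist (X * R t) X) \<longlongrightarrow> 0) (at t0)"
proof -
  have entries: "mat_dist (X * R t) X
      = sqrt (\<Sum>i<p. \<Sum>j<q. ((\<Sum>l<q. X $$ (i,l) * R t $$ (l,j)) - X $$ (i,j))\<^sup>2)" for t
    unfolding mat_dist_def using X R[of t]
    by (auto simp: scalar_prod_def lessThan_atLeast0 intro!: sum.cong arg_cong[where f=sqrt])
  have "isCont (\<lambda>t. mat_dist (X * R t) X) t0"
    unfolding entries by (intro continuous_intros cont) auto
  moreover have "mat_dist (X * R t0) X = 0"
    using X unfolding R0 by (simp add: mat_dist_def)
  ultimately show ?thesis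
    by (metis isCont_def)
qed

lemma eventually_feasible_near_along_symplectic_curve:
  fixes R :: "'a::t2_space \<Rightarrow> real mat"
  assumes X: "feasible n k X" and R: "\<And>t. symplectic k (R t)" and R0: "R t0 = 1\<^sub>m (2*k)"
    and cont: "\<And>i j. i < 2*k \<Longrightarrow> j < 2*k \<Longrightarrow> isCont (\<lambda>t. R t $$ (i,j)) t0"
    and "e > 0"
  shows "eventually (\<lambda>t. feasible n k (X * R t) \<and> mat_dist (X * R t) X < e) (at t0)"
proof -
  have "((\<lambda>t. mat_dist (X * R t) X) \<longlongrightarrow> 0) (at t0)"
    using X R R0 cont unfolding feasible_def symplectic_def by (intro mat_dist_mult_right_tendsto) auto
  then have "eventually (\<lambda>t. mat_dist (X * R t) X < e) (at t0)"
    using \<open>e > 0\<close> by (rule order_tendstoD)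
  then show ?thesis
    using feasible_mult_symplectic[OF X R] by simp
qed

lemma local_min_along_symplectic_curve:
  fixes R :: "'a::t2_space \<Rightarrow> real mat"
  assumes min: "local_min n k nu M X"
    and R: "\<And>t. symplectic k (R t)" and R0: "R t0 = 1\<^sub>m (2*k)"
    and cont: "\<And>i j. i < 2*k \<Longrightarrow> j < 2*k \<Longrightarrow> isCont (\<lambda>t. R t $$ (i,j)) t0"
  shows "eventually (\<lambda>t. fobj k nu M X \<le> fobj k nu M (X * R t)) (at t0)"
proof -
  obtain e where "e > 0" and le: "\<And>Y. feasible n k Y \<Longrightarrow> mat_dist Y X < e \<Longrightarrow> fobj k nu M X \<le> fobj k nu M Y"
    using min unfolding local_min_def by blast
  have X: "feasible n k X" using min unfolding local_min_def by blast
  from X R R0 cont \<open>e > 0\<close>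
  have "eventually (\<lambda>t. feasible n k (X * R t) \<and> mat_dist (X * R t) X < e) (at t0)"
    by (rule eventually_feasible_near_along_symplectic_curve)
  then show ?thesis by (rule eventually_mono) (use le in blast)
qed

lemma local_max_along_symplectic_curve:
  fixes R :: "'a::t2_space \<Rightarrow> real mat"
  assumes max: "local_max n k nu M X"
    and R: "\<And>t. symplectic k (R t)" and R0: "R t0 = 1\<^sub>m (2*k)"
    and cont: "\<And>i j. i < 2*k \<Longrightarrow> j < 2*k \<Longrightarrow> isCont (\<lambda>t. R t $$ (i,j)) t0"
  shows "eventually (\<lambda>t. fobj k nu M (X * R t) \<le> fobj k nu M X) (at t0)"
proof -
  obtain e where "e > 0" and le: "\<And>Y. feasible n k Y \<Longrightarrow> mat_dist Y X < e \<Longrightarrow> fobj k nu M Y \<le> fobj k nu M X"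
    using max unfolding local_max_def by blast
  have X: "feasible n k X" using max unfolding local_max_def by blast
  from X R R0 cont \<open>e > 0\<close>
  have "eventually (\<lambda>t. feasible n k (X * R t) \<and> mat_dist (X * R t) X < e) (at t0)"
    by (rule eventually_feasible_near_along_symplectic_curve)
  then show ?thesis by (rule eventually_mono) (use le in blast)
qed

lemma fobj_diag_congruent:
  assumes X: "X \<in> carrier_mat (2*n) (2*k)" and M: "M \<in> carrier_mat (2*n) (2*n)"
    and XMX: "transpose_mat X * M * X = diag2 k D"
  shows "fobj k nu M X = 2 * (\<Sum>i<k. nu i * D i)"
  using fobj_mult_block_diag[OF X M XMX one_carrier_mat one_carrier_mat, of nu] X
  by (simp add: block_diag_one diag_trace_form_one)

lemma not_local_min_if_misordered:
  assumes X: "feasible n k X" and M: "M \<in> carrier_mat (2*n) (2*n)"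
    and XMX: "transpose_mat X * M * X = diag2 k D"
    and ab: "a < b" "b < k" and nu: "nu a < nu b" and D: "D a < D b"
  shows "\<not> local_min n k nu M X"
proof
  assume min: "local_min n k nu M X"
  have Xc: "X \<in> carrier_mat (2*n) (2*k)" using X unfolding feasible_def by blast
  have ab': "a < k" "b < k" "a \<noteq> b" using ab by auto
  let ?G = "givens_rotation k a b"
  have fobj_G: "fobj k nu M (X * block_diag k (?G t) (?G t))
      = fobj k nu M X - 2 * ((sin t)\<^sup>2 * (nu b - nu a) * (D b - D a))" for t
    using fobj_mult_block_diag[OF Xc M XMX givens_rotation_carrier givens_rotation_carrier, of nu]
    by (simp add: diag_trace_form_givens_rotation[OF ab'] fobj_diag_congruent[OF Xc M XMX])
  have "eventually (\<lambda>t. fobj k nu M X \<le> fobj k nu M (X * block_diag k (?G t) (?G t))) (at 0)"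
    using min
    by (rule local_min_along_symplectic_curve)
      (auto simp: givens_rotation_zero block_diag_one
        intro!: symplectic_block_diag givens_rotation_orthogonal[OF ab'] givens_rotation_carrier
          isCont_block_diag_entry isCont_givens_rotation_entry)
  then have "eventually (\<lambda>t. fobj k nu M X \<le> fobj k nu M (X * block_diag k (?G t) (?G t))) (at_right 0)"
    by (simp add: eventually_at_split)
  moreover have "eventually (\<lambda>t. 0 < t \<and> t < pi) (at_right 0)"
    unfolding eventually_at_right_field using pi_gt_zero by blast
  ultimately have "eventually (\<lambda>t::real. False) (at_right 0)"
  proof eventually_elim
    case (elim t)
    then have "0 < sin t"
      by (simp add: sin_gt_zero)
    then have "0 < (sin t)\<^sup>2 * (nu b - nu a) * (D b - D a)"
      using nu D by simp
    with elim show False unfolding fobj_G by linarith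
  qed
  then show False by simp
qed

lemma not_local_max_if_positive:
  assumes X: "feasible n k X" and M: "M \<in> carrier_mat (2*n) (2*n)"
    and XMX: "transpose_mat X * M * X = diag2 k D"
    and a: "a < k" and nu: "0 < nu a" and D: "0 < D a"
  shows "\<not> local_max n k nu M X"
proof
  assume max: "local_max n k nu M X"
  have Xc: "X \<in> carrier_mat (2*n) (2*k)" using X unfolding feasible_def by blast
  let ?S = "\<lambda>t. block_diag k (coord_scaling k a (exp t)) (coord_scaling k a (1 / exp t))"
  have fobj_S: "fobj k nu M (X * ?S t) = fobj k nu M X + nu a * D a * (exp t - 1 / exp t)\<^sup>2" for t
    using fobj_mult_block_diag[OF Xc M XMX coord_scaling_carrier coord_scaling_carrier, of nu]
    by (simp add: diag_trace_form_coord_scaling[OF a] fobj_diag_congruent[OF Xc M XMX]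
        power2_eq_square field_simps)
  have "eventually (\<lambda>t. fobj k nu M (X * ?S t) \<le> fobj k nu M X) (at 0)"
    using max
    by (rule local_max_along_symplectic_curve)
      (auto simp: coord_scaling_one block_diag_one
        intro!: symplectic_block_diag coord_scaling_transpose_inverse coord_scaling_carrier
          isCont_block_diag_entry isCont_coord_scaling_entry)
  then have "eventually (\<lambda>t. fobj k nu M (X * ?S t) \<le> fobj k nu M X) (at_right 0)"
    by (simp add: eventually_at_split)
  moreover have "eventually (\<lambda>t. 0 < t) (at_right (0::real))"
    by (rule eventually_at_right_less)
  ultimately have "eventually (\<lambda>t::real. False) (at_right 0)"
  proof eventually_elim
    case (elim t)
    then have "exp t - 1 / exp t \<noteq> 0"
      by (simp add: field_simps flip: exp_add)
    then have "0 < nu a * D a * (exp t - 1 / exp t)\<^sup>2"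
      using nu D by simp
    with elim show False unfolding fobj_S by linarith
  qed
  then show False by simp
qed

theorem proposition3p8:
  fixes n k :: nat and M X :: "real mat" and nu d :: "nat \<Rightarrow> real" and idx :: "nat \<Rightarrow> nat"
  assumes "1 \<le> k" and "k \<le> n"
    and "sym_pos_def (2*n) M"
    and "0 < nu 0" and "\<And>j. Suc j < k \<Longrightarrow> nu j < nu (Suc j)"
    and "symp_eigenvalues n M d"
    and "\<forall>j<k. idx j < n" and "inj_on idx {..<k}"
    and "critical_point n k nu M X"
    and "transpose_mat X * M * X = diag2 k (\<lambda>j. d (idx j))"
    and "a < b" and "b < k" and "d (idx a) < d (idx b)"
  shows "\<not> local_min n k nu M X \<and> saddle_point n k nu M X"
proof -
  have X: "feasible n k X" using assms(9) unfolding critical_point_def by blast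
  have M: "M \<in> carrier_mat (2*n) (2*n)" using assms(3) unfolding sym_pos_def_def by blast
  have nu_less: "nu i < nu j" if "i < j" "j < k" for i j
    by (rule lift_Suc_mono_less_ivl[of "{m. Suc m < k}"]) (use assms(5) that in auto)
  have "0 < nu a"
    using assms(4) nu_less[of 0 a] assms(11,12) by (cases "a = 0") auto
  moreover have "0 < d (idx a)"
    using assms(6,7,11,12) unfolding symp_eigenvalues_def by auto
  ultimately have not_max: "\<not> local_max n k nu M X"
    using assms(11,12) by (intro not_local_max_if_positive[OF X M assms(10)]) auto
  have not_min: "\<not> local_min n k nu M X"
    using assms(11,12,13) nu_less by (intro not_local_min_if_misordered[OF X M assms(10)]) auto
  show ?thesis
    using not_min not_max assms(9) unfolding saddle_point_def by blast
qed

end
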